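(* Let $e^{it\Delta}$ denote the free Schr\"odinger propagator on $\mathbb{R}^2$. There is no constant $C$ such that for all Schwartz functions $F$ on $\mathbb{R}\times\mathbb{R}^2$ with $F(s,\cdot)$ radial for each $s$, $$\Big(\int_{\mathbb{R}}\Big\|\int_{s<t}e^{i(t-s)\Delta}F(s)\,ds\Big\|_{L^\infty(\mathbb{R}^2)}^2dt\Big)^{1/2}\le C\Big(\int_{\mathbb{R}}\|F(s)\|_{L^1(\mathbb{R}^2)}^2ds\Big)^{1/2}.$$
   Context: $u(t)=e^{it\Delta}f$ solves $i\partial_tu+\Delta u=0$, $u(0)=f$; $F(s)=F(s,\cdot)$. *)

theory Defs
  imports "HOL-Probability.Probability"
begin

text \<open>Schwartz functions on a Euclidean space: the largest class of functions that are
  (Frechet) differentiable, rapidly decreasing, and whose partial derivatives along every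
  basis direction are again in the class.  Equivalently: smooth functions all of whose
  derivatives decay faster than any power.\<close>
coinductive schwartz :: "('a::euclidean_space \<Rightarrow> complex) \<Rightarrow> bool" where
  "\<lbrakk> \<And>z. (g has_derivative g' z) (at z);
     \<And>N::nat. \<exists>C. \<forall>z. (1 + norm z) ^ N * cmod (g z) \<le> C;
     \<And>b. b \<in> Basis \<Longrightarrow> schwartz (\<lambda>z. g' z b) \<rbrakk> \<Longrightarrow> schwartz g"

definition schrod_prop :: "real \<Rightarrow> (real^2 \<Rightarrow> complex) \<Rightarrow> real^2 \<Rightarrow> complex" where
  "schrod_prop t f x =
     (if t = 0 then f x
      else (1 / (4 * complex_of_real pi * \<i> * complex_of_real t)) *
           (LINT y|lborel. exp (\<i> * complex_of_real ((norm (x - y))\<^sup>2 / (4 * t))) * f y))"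

definition duhamel :: "(real \<Rightarrow> real^2 \<Rightarrow> complex) \<Rightarrow> real \<Rightarrow> real^2 \<Rightarrow> complex" where
  "duhamel F t x = (LINT s:{..<t}|lborel. schrod_prop (t - s) (F s) x)"

definition Linf_norm :: "(real^2 \<Rightarrow> complex) \<Rightarrow> ennreal" where
  "Linf_norm g = esssup lborel (\<lambda>x. ennreal (cmod (g x)))"

definition L1_norm :: "(real^2 \<Rightarrow> complex) \<Rightarrow> ennreal" where
  "L1_norm g = (\<integral>\<^sup>+ x. ennreal (cmod (g x)) \<partial>lborel)"

end

theory Submission
  imports Defs
begin

text \<open>
  The estimate fails for the radial sources \<open>F\<^sub>N s y = exp (- s\<^sup>2 / (2 N\<^sup>2)) exp (- |y|\<^sup>2)\<close>,
  whose right-hand side is a constant multiple of \<open>N\<close>. The free evolution of the Gaussian is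
  explicit, \<open>exp (i \<tau> \<Delta>) exp (- |y|\<^sup>2) = exp (- |x|\<^sup>2 / (1 + 4 i \<tau>)) / (1 + 4 i \<tau>)\<close>, and for
  \<open>\<tau> \<ge> 1\<close> and \<open>|x| \<le> 1\<close> its imaginary part is at most \<open>- 1 / (10 \<tau>)\<close>. There is no cancellation
  in the time integral: for \<open>0 \<le> t \<le> N\<close> and \<open>|x| \<le> 1\<close> the Duhamel term has modulus at least
  \<open>c ln N - 1\<close> for a fixed \<open>c > 0\<close>, since \<open>\<integral> ds / (t - s)\<close> over \<open>-N \<le> s \<le> t - 1\<close> grows
  logarithmically. So the left-hand side is at least \<open>N (c ln N - 1)\<^sup>2\<close>, which is not \<open>O(N)\<close>.

  The explicit evolution comes from the Fourier transform \<open>\<Phi> l = \<integral> exp (- \<alpha> |y|\<^sup>2 - i l v\<cdot>y) dy\<close>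
  of a complex Gaussian: integrating by parts along \<open>v\<close> gives the linear equation
  \<open>\<Phi>' l = - l |v|\<^sup>2 / (2 \<alpha>) \<Phi> l\<close>, and \<open>\<Phi> 0 = \<pi> / \<alpha>\<close> by integrating in polar coordinates.
\<close>

section \<open>Gaussian integrals\<close>

lemma
  fixes \<sigma> :: real assumes s: "\<sigma> > 0"
  shows integrable_gaussian_real: "integrable lborel (\<lambda>x. exp (- x\<^sup>2 / (2 * \<sigma>\<^sup>2)))"
    and integral_gaussian_real: "(LINT x|lborel. exp (- x\<^sup>2 / (2 * \<sigma>\<^sup>2))) = sqrt (2 * pi * \<sigma>\<^sup>2)"
proof -
  have e: "exp (- x\<^sup>2 / (2 * \<sigma>\<^sup>2)) = sqrt (2 * pi * \<sigma>\<^sup>2) * normal_density 0 \<sigma> x" for x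
    unfolding normal_density_def using s by simp
  show "integrable lborel (\<lambda>x. exp (- x\<^sup>2 / (2 * \<sigma>\<^sup>2)))" unfolding e
    by (intro integrable_mult_right integrable_normal_density) (use s in auto)
  show "(LINT x|lborel. exp (- x\<^sup>2 / (2 * \<sigma>\<^sup>2))) = sqrt (2 * pi * \<sigma>\<^sup>2)" unfolding e using s by simp
qed

lemma emeasure_lborel_ball_real2:
  fixes c :: "real^2" assumes "r \<ge> 0"
  shows "emeasure lborel (ball c r) = ennreal (pi * r\<^sup>2)"
  using emeasure_ball[OF assms, of c] by (simp add: eval_unit_ball_vol)

text \<open>We push forward along \<open>-|y|\<^sup>2\<close> rather than \<open>|y|\<^sup>2\<close> so that the sets \<open>{x<..}\<close> of
  \<open>measure_eqI_lessThan\<close> have finite measure.\<close>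
lemma distr_lborel_neg_norm_power2_real2:
  "distr (lborel::(real^2) measure) borel (\<lambda>y. - (norm y)\<^sup>2)
     = density lborel (\<lambda>u. ennreal pi * indicator {..<0} u)"
proof (rule measure_eqI_lessThan)
  fix x :: real
  have "x < - (norm y)\<^sup>2 \<longleftrightarrow> x < 0 \<and> (norm y)\<^sup>2 < -x" for y :: "real^2"
    using zero_le_power2[of "norm y"] by linarith
  moreover have "(norm y)\<^sup>2 < -x \<longleftrightarrow> norm y < sqrt (-x)" for y :: "real^2"
    using real_sqrt_less_iff[of "(norm y)\<^sup>2" "-x"] by simp
  ultimately have "{y::real^2. x < - (norm y)\<^sup>2} = (if x < 0 then ball 0 (sqrt (-x)) else {})"
    by auto
  then have e: "emeasure (distr (lborel::(real^2) measure) borel (\<lambda>y. - (norm y)\<^sup>2)) {x<..}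
      = ennreal (if x < 0 then pi * (-x) else 0)"
    using emeasure_lborel_ball_real2[of "sqrt (-x)" 0]
    by (subst emeasure_distr) (auto simp: vimage_def)
  then show "emeasure (distr (lborel::(real^2) measure) borel (\<lambda>y. - (norm y)\<^sup>2)) {x<..} < \<infinity>"
    by simp
  have "emeasure (density lborel (\<lambda>u. ennreal pi * indicator {..<0} u)) {x<..}
      = (\<integral>\<^sup>+ u. ennreal pi * indicator {x<..<0} u \<partial>lborel)"
    by (subst emeasure_density) (auto intro!: nn_integral_cong split: split_indicator)
  also have "\<dots> = ennreal (if x < 0 then pi * (-x) else 0)"
    by (subst nn_integral_cmult_indicator) (auto simp: ennreal_mult[symmetric])
  finally show "emeasure (distr (lborel::(real^2) measure) borel (\<lambda>y. - (norm y)\<^sup>2)) {x<..}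
      = emeasure (density lborel (\<lambda>u. ennreal pi * indicator {..<0} u)) {x<..}"
    using e by simp
qed auto

lemma
  fixes g :: "real \<Rightarrow> complex" assumes [measurable]: "g \<in> borel_measurable borel"
  shows integrable_radial_real2_iff:
      "integrable lborel (\<lambda>y::real^2. g (- (norm y)\<^sup>2)) \<longleftrightarrow> set_integrable lborel {..<0} g"
    and integral_radial_real2:
      "(LINT y|lborel. g (- (norm (y::real^2))\<^sup>2)) = pi * (LINT u:{..<0}|lborel. g u)"
proof -
  have density: "density lborel (\<lambda>u. ennreal pi * indicator {..<0} u)
      = density lborel (\<lambda>u. ennreal (pi * indicator {..<0} u))"
    by (simp add: ennreal_mult ennreal_indicator)
  have "integrable lborel (\<lambda>y::real^2. g (- (norm y)\<^sup>2))
      \<longleftrightarrow> integrable lborel (\<lambda>u. pi *\<^sub>R (indicator {..<0} u *\<^sub>R g u))"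
    by (subst integrable_distr_eq[symmetric, where N=borel])
       (auto simp: distr_lborel_neg_norm_power2_real2 density integrable_density)
  also have "\<dots> \<longleftrightarrow> set_integrable lborel {..<0} g"
    unfolding set_integrable_def
    using integrable_scaleR_right[of pi lborel "\<lambda>u. indicator {..<0} u *\<^sub>R g u"]
      integrable_scaleR_right[of "1/pi" lborel "\<lambda>u. pi *\<^sub>R (indicator {..<0} u *\<^sub>R g u)"]
    by auto
  finally show "integrable lborel (\<lambda>y::real^2. g (- (norm y)\<^sup>2)) \<longleftrightarrow> set_integrable lborel {..<0} g" .
  have "(LINT y|lborel. g (- (norm (y::real^2))\<^sup>2))
      = (LINT u|lborel. (pi * indicator {..<0} u) *\<^sub>R g u)"
    by (subst integral_distr[symmetric, where N=borel])
       (auto simp: distr_lborel_neg_norm_power2_real2 density integral_density)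
  then show "(LINT y|lborel. g (- (norm (y::real^2))\<^sup>2)) = pi * (LINT u:{..<0}|lborel. g u)"
    unfolding set_lebesgue_integral_def by (simp add: scaleR_conv_of_real mult.assoc)
qed

lemma tendsto_exp_mult_at_bot:
  fixes a :: real assumes "a > 0"
  shows "((\<lambda>t. exp (a * t)) \<longlongrightarrow> 0) at_bot"
  using assms
  by (auto intro!: exp_at_bot[THEN filterlim_compose] filterlim_tendsto_pos_mult_at_bot
      filterlim_ident)

lemma set_integrable_exp_halfline_real:
  fixes a :: real assumes a: "a > 0"
  shows "set_integrable lborel {..<0} (\<lambda>u. exp (a * u))"
proof -
  have [simp]: "a \<noteq> 0" using a by simp
  have "set_integrable lborel (einterval (-\<infinity>) (ereal 0)) (\<lambda>u. exp (a * u))"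
  proof (rule interval_integral_FTC_nonneg(1))
    let ?F = "\<lambda>u. exp (a * u) / a"
    show "(?F has_real_derivative exp (a * x)) (at x)" for x
      by (auto intro!: derivative_eq_intros)
    show "((?F \<circ> real_of_ereal) \<longlongrightarrow> 1/a) (at_left (ereal 0))"
      by (auto simp: zero_ereal_def ereal_tendsto_simps intro!: tendsto_eq_intros)
    show "((?F \<circ> real_of_ereal) \<longlongrightarrow> 0) (at_right (-\<infinity>))"
      unfolding ereal_tendsto_simps
      by (intro filterlim_compose[OF _ tendsto_exp_mult_at_bot[OF a]])
        (auto intro!: tendsto_eq_intros filterlim_ident)
  qed (auto intro!: continuous_intros)
  then show ?thesis by simp
qed

lemma
  fixes a :: complex assumes a: "Re a > 0"
  shows set_integrable_exp_halfline:
      "set_integrable lborel {..<0} (\<lambda>u. exp (a * complex_of_real u))"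
    and set_integral_exp_halfline:
      "(LINT u:{..<0}|lborel. exp (a * complex_of_real u)) = 1/a"
proof -
  show i: "set_integrable lborel {..<0} (\<lambda>u. exp (a * complex_of_real u))"
  proof (rule set_integrable_bound[OF set_integrable_exp_halfline_real[OF a]])
    show "set_borel_measurable lborel {..<0} (\<lambda>u. exp (a * complex_of_real u))"
      unfolding set_borel_measurable_def by measurable
    show "AE x in lborel. x \<in> {..<0} \<longrightarrow>
        norm (exp (a * complex_of_real x)) \<le> norm (exp (Re a * x))"
      by auto
  qed
  have [simp]: "a \<noteq> 0" using a by auto
  have "(LBINT x=(-\<infinity>)..(ereal 0). exp (a * complex_of_real x)) = 1/a - 0"
  proof (rule interval_integral_FTC_integrable)
    let ?F = "\<lambda>u. exp (a * complex_of_real u) / a"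
    show "(?F has_vector_derivative exp (a * complex_of_real x)) (at x)" for x
    proof -
      have "((\<lambda>z. exp (a * z) / a) has_field_derivative exp (a * complex_of_real x))
          (at (complex_of_real x))"
        by (auto intro!: derivative_eq_intros)
      from has_vector_derivative_real_field[OF this] show ?thesis .
    qed
    show "set_integrable lborel (einterval (-\<infinity>) (ereal 0)) (\<lambda>u. exp (a * complex_of_real u))"
      using i by simp
    show "((?F \<circ> real_of_ereal) \<longlongrightarrow> 1/a) (at_left (ereal 0))"
      by (auto simp: zero_ereal_def ereal_tendsto_simps intro!: tendsto_eq_intros)
    have "((\<lambda>t. exp (a * complex_of_real t)) \<longlongrightarrow> 0) at_bot"
      by (rule tendsto_norm_zero_cancel) (use tendsto_exp_mult_at_bot[OF a] in simp)
    then have "((\<lambda>t. ?F t) \<longlongrightarrow> 0) at_bot"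
      using tendsto_divide[OF _ tendsto_const, of _ 0 at_bot a] by simp
    then show "((?F \<circ> real_of_ereal) \<longlongrightarrow> 0) (at_right (-\<infinity>))"
      unfolding ereal_tendsto_simps by simp
  qed (auto intro!: continuous_intros)
  then show "(LINT u:{..<0}|lborel. exp (a * complex_of_real u)) = 1/a"
    by (simp add: interval_lebesgue_integral_def)
qed

lemma
  fixes a :: complex assumes a: "Re a > 0"
  shows integrable_gaussian_real2:
      "integrable lborel (\<lambda>y::real^2. exp (- a * complex_of_real ((norm y)\<^sup>2)))"
    and integral_gaussian_real2:
      "(LINT y::real^2|lborel. exp (- a * complex_of_real ((norm y)\<^sup>2))) = pi / a"
proof -
  have e: "exp (- a * complex_of_real ((norm y)\<^sup>2)) = exp (a * complex_of_real (- (norm y)\<^sup>2))"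
    for y :: "real^2"
    by simp
  show "integrable lborel (\<lambda>y::real^2. exp (- a * complex_of_real ((norm y)\<^sup>2)))"
    unfolding e by (subst integrable_radial_real2_iff[where g="\<lambda>u. exp (a * u)"])
      (auto intro: set_integrable_exp_halfline[OF a])
  show "(LINT y::real^2|lborel. exp (- a * complex_of_real ((norm y)\<^sup>2))) = pi / a"
    unfolding e by (subst integral_radial_real2[where g="\<lambda>u. exp (a * u)"])
      (auto simp: set_integral_exp_halfline[OF a])
qed

lemma integrable_real_gaussian_real2:
  fixes c :: real assumes "c > 0"
  shows "integrable lborel (\<lambda>y::real^2. exp (- c * (norm y)\<^sup>2))"
proof -
  have "integrable lborel
      (\<lambda>y::real^2. norm (exp (- complex_of_real c * complex_of_real ((norm y)\<^sup>2))))"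
    using assms by (intro integrable_norm integrable_gaussian_real2) simp
  moreover have
    "norm (exp (- complex_of_real c * complex_of_real ((norm y)\<^sup>2))) = exp (- c * (norm y)\<^sup>2)"
    for y :: "real^2"
    by (simp add: norm_exp_eq_Re)
  ultimately show ?thesis by simp
qed

lemma nn_integral_gaussian_real2:
  "(\<integral>\<^sup>+ y. ennreal (exp (- (norm (y::real^2))\<^sup>2)) \<partial>lborel) = ennreal pi"
proof -
  have "complex_of_real (LINT y::real^2|lborel. exp (- (norm y)\<^sup>2))
      = (LINT y::real^2|lborel. exp (- 1 * complex_of_real ((norm y)\<^sup>2)))"
    unfolding integral_complex_of_real[symmetric]
    by (intro Bochner_Integration.integral_cong) (simp_all add: exp_of_real[symmetric])
  also have "\<dots> = pi" using integral_gaussian_real2[of 1] by simp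
  finally have "(LINT y::real^2|lborel. exp (- (norm y)\<^sup>2)) = pi"
    using of_real_eq_iff by blast
  moreover have "integrable lborel (\<lambda>y::real^2. exp (- (norm y)\<^sup>2))"
    using integrable_real_gaussian_real2[of 1] by simp
  ultimately show ?thesis by (subst nn_integral_eq_integral) auto
qed

lemma one_plus_le_exp_power2:
  fixes c r :: real assumes c: "c > 0"
  shows "1 + r \<le> (2 + 1 / (2 * c)) * exp (c * r\<^sup>2)"
proof -
  have "r \<le> 1 / (2 * c) + c * r\<^sup>2 / 2"
  proof -
    have "0 \<le> (c * r - 1)\<^sup>2 / (2 * c)" using c by simp
    also have "\<dots> = c * r\<^sup>2 / 2 - r + 1 / (2 * c)"
      using c by (simp add: field_simps power2_eq_square)
    finally show ?thesis by simp
  qed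
  also have "1 + (1 / (2 * c) + c * r\<^sup>2 / 2) \<le> (2 + 1 / (2 * c)) * (1 + c * r\<^sup>2)"
    using c by (simp add: algebra_simps)
  also have "\<dots> \<le> (2 + 1 / (2 * c)) * exp (c * r\<^sup>2)"
    using c by (intro mult_left_mono exp_ge_add_one_self) auto
  finally show ?thesis by simp
qed

lemma one_plus_power_le_exp_power2:
  fixes c r :: real assumes c: "c > 0" and r: "r \<ge> 0"
  shows "(1 + r) ^ n \<le> (2 + n / (2 * c)) ^ n * exp (c * r\<^sup>2)"
proof (cases "n = 0")
  case False
  then have n: "real n > 0" by simp
  have "1 + r \<le> (2 + 1 / (2 * (c / n))) * exp ((c / n) * r\<^sup>2)"
    using c n by (intro one_plus_le_exp_power2) simp
  also have "1 / (2 * (c / n)) = n / (2 * c)" by simp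
  finally have "(1 + r) ^ n \<le> ((2 + n / (2 * c)) * exp ((c / n) * r\<^sup>2)) ^ n"
    using r by (intro power_mono) auto
  also have "\<dots> = (2 + n / (2 * c)) ^ n * exp (c * r\<^sup>2)"
    using n by (simp add: power_mult_distrib exp_of_nat_mult[symmetric])
  finally show ?thesis .
qed (use c in simp)

lemma integrable_polynomial_gaussian_real2:
  fixes c :: real assumes c: "c > 0"
  shows "integrable lborel (\<lambda>y::real^2. (1 + norm y) ^ n * exp (- c * (norm y)\<^sup>2))"
proof (rule Bochner_Integration.integrable_bound)
  let ?K = "(2 + n / (2 * (c / 2))) ^ n"
  show "integrable lborel (\<lambda>y::real^2. ?K * exp (- (c / 2) * (norm y)\<^sup>2))"
    using integrable_real_gaussian_real2[of "c / 2"] c by simp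
  show "AE y in lborel. norm ((1 + norm y) ^ n * exp (- c * (norm (y::real^2))\<^sup>2))
      \<le> norm (?K * exp (- (c / 2) * (norm y)\<^sup>2))"
  proof (rule AE_I2)
    fix y :: "real^2"
    have "(1 + norm y) ^ n * exp (- c * (norm y)\<^sup>2)
        \<le> ?K * exp ((c / 2) * (norm y)\<^sup>2) * exp (- c * (norm y)\<^sup>2)"
      using c by (intro mult_right_mono one_plus_power_le_exp_power2) auto
    also have "\<dots> = ?K * exp (- (c / 2) * (norm y)\<^sup>2)"
      by (simp add: mult.assoc exp_add[symmetric])
    finally show "norm ((1 + norm y) ^ n * exp (- c * (norm y)\<^sup>2))
        \<le> norm (?K * exp (- (c / 2) * (norm y)\<^sup>2))"
      by simp
  qed
qed measurable

section \<open>Differentiation under the integral sign\<close>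

lemma norm_diff_le_of_vector_derivative_bound:
  fixes F F' :: "real \<Rightarrow> complex"
  assumes der: "\<And>t. t \<in> ball t0 r \<Longrightarrow> (F has_vector_derivative F' t) (at t)"
    and bd: "\<And>t. t \<in> ball t0 r \<Longrightarrow> norm (F' t) \<le> B" and t: "t \<in> ball t0 r"
  shows "norm (F t - F t0) \<le> B * \<bar>t - t0\<bar>"
proof -
  have t0: "t0 \<in> ball t0 r" using t by (auto simp: dist_norm)
  have "norm (F t - F t0) \<le> B * norm (t - t0)"
  proof (rule differentiable_bound[where f' = "\<lambda>t h. h *\<^sub>R F' t"])
    show "convex (ball t0 r)" by simp
    show "(F has_derivative (\<lambda>h. h *\<^sub>R F' x)) (at x within ball t0 r)" if "x \<in> ball t0 r" for x
      using der[OF that] unfolding has_vector_derivative_def by (rule has_derivative_at_withinI)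
    show "onorm (\<lambda>h. h *\<^sub>R F' x) \<le> B" if "x \<in> ball t0 r" for x
      using onorm_scaleR_left[OF bounded_linear_ident, of "F' x"] bd[OF that]
      by (simp add: onorm_id)
  qed (use t t0 in auto)
  then show ?thesis by simp
qed

lemma has_vector_derivative_iff_difference_quotient:
  fixes F :: "real \<Rightarrow> complex"
  shows "(F has_vector_derivative D) (at x)
    \<longleftrightarrow> ((\<lambda>y. (F y - F x) / complex_of_real (y - x)) \<longlongrightarrow> D) (at x)"
  unfolding has_vector_derivative_complex_iff has_field_derivative_iff tendsto_complex_iff
  by (simp add: Re_divide_of_real Im_divide_of_real)

lemma integral_dominated_convergence_at:
  fixes s :: "real \<Rightarrow> 'a \<Rightarrow> 'b::{banach, second_countable_topology}"
  assumes "f \<in> borel_measurable M" "\<And>t. s t \<in> borel_measurable M" "integrable M w"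
    and lim: "AE x in M. ((\<lambda>t. s t x) \<longlongrightarrow> f x) (at t0)"
    and bound: "\<forall>\<^sub>F t in at t0. AE x in M. norm (s t x) \<le> w x"
  shows "((\<lambda>t. integral\<^sup>L M (s t)) \<longlongrightarrow> integral\<^sup>L M f) (at t0)"
  unfolding tendsto_at_iff_sequentially comp_def
proof (intro allI impI)
  fix X :: "nat \<Rightarrow> real" assume "\<forall>i. X i \<in> UNIV - {t0}" "X \<longlonglongrightarrow> t0"
  then have X: "filterlim X (at t0) sequentially"
    by (intro filterlim_atI) (auto intro: always_eventually)
  from filterlim_iff[THEN iffD1, OF X, rule_format, OF bound]
  obtain N where w: "\<And>n. N \<le> n \<Longrightarrow> AE x in M. norm (s (X n) x) \<le> w x"
    by (auto simp: eventually_sequentially)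
  show "(\<lambda>n. integral\<^sup>L M (s (X n))) \<longlonglongrightarrow> integral\<^sup>L M f"
  proof (rule LIMSEQ_offset, rule integral_dominated_convergence)
    show "AE x in M. norm (s (X (n + N)) x) \<le> w x" for n
      by (rule w) auto
    show "AE x in M. (\<lambda>n. s (X (n + N)) x) \<longlonglongrightarrow> f x"
      using lim
    proof eventually_elim
      fix x assume "((\<lambda>t. s t x) \<longlongrightarrow> f x) (at t0)"
      then show "(\<lambda>n. s (X (n + N)) x) \<longlonglongrightarrow> f x"
        by (intro LIMSEQ_ignore_initial_segment filterlim_compose[OF _ X])
    qed
  qed (use assms in auto)
qed

lemma has_vector_derivative_integral_parametric:
  fixes f f' :: "real \<Rightarrow> 'a \<Rightarrow> complex"
  assumes r: "r > 0" and int: "integrable M (f t0)"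
    and meas: "\<And>t. f t \<in> borel_measurable M" and meas': "f' t0 \<in> borel_measurable M"
    and der: "\<And>t y. t \<in> ball t0 r \<Longrightarrow> y \<in> space M \<Longrightarrow> ((\<lambda>t. f t y) has_vector_derivative f' t y) (at t)"
    and g: "integrable M g"
    and bound: "\<And>t y. t \<in> ball t0 r \<Longrightarrow> y \<in> space M \<Longrightarrow> norm (f' t y) \<le> g y"
  shows "((\<lambda>t. LINT y|M. f t y) has_vector_derivative (LINT y|M. f' t0 y)) (at t0)"
proof -
  have lipschitz: "norm (f t y - f t0 y) \<le> g y * \<bar>t - t0\<bar>" if "t \<in> ball t0 r" "y \<in> space M" for t y
    using der bound that
    by (intro norm_diff_le_of_vector_derivative_bound[where F="\<lambda>t. f t y" and F'="\<lambda>t. f' t y"])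
      auto
  have integrable: "integrable M (f t)" if "t \<in> ball t0 r" for t
  proof (rule Bochner_Integration.integrable_bound[where f="\<lambda>y. norm (f t0 y) + g y * \<bar>t - t0\<bar>"])
    show "AE y in M. norm (f t y) \<le> norm (norm (f t0 y) + g y * \<bar>t - t0\<bar>)"
      using lipschitz[OF that] norm_triangle_sub[of "f t _" "f t0 _"]
      by (intro AE_I2) (smt (verit) real_norm_def)
  qed (use int g meas in auto)
  have near: "\<forall>\<^sub>F t in at t0. t \<in> ball t0 r \<and> t \<noteq> t0"
    using r by (auto simp: eventually_at dist_commute intro!: exI[of _ r])
  then have "\<forall>\<^sub>F t in at t0. (LINT y|M. (f t y - f t0 y) / complex_of_real (t - t0))
      = ((LINT y|M. f t y) - (LINT y|M. f t0 y)) / complex_of_real (t - t0)"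
    by eventually_elim (use integrable int in simp)
  moreover have "((\<lambda>t. LINT y|M. (f t y - f t0 y) / complex_of_real (t - t0))
      \<longlongrightarrow> (LINT y|M. f' t0 y)) (at t0)"
  proof (rule integral_dominated_convergence_at[where w=g])
    show "AE y in M. ((\<lambda>t. (f t y - f t0 y) / complex_of_real (t - t0)) \<longlongrightarrow> f' t0 y) (at t0)"
      using der[of t0] r by (intro AE_I2) (simp add: has_vector_derivative_iff_difference_quotient)
    show "\<forall>\<^sub>F t in at t0. AE y in M. norm ((f t y - f t0 y) / complex_of_real (t - t0)) \<le> g y"
      using near by eventually_elim
        (auto intro!: AE_I2 lipschitz simp: norm_divide divide_le_eq simp flip: of_real_diff)
  qed (use meas meas' g in auto)
  ultimately show ?thesis
    unfolding has_vector_derivative_iff_difference_quotient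
    by (rule Lim_transform_eventually[rotated])
qed

section \<open>Polynomials times Gaussians are Schwartz functions\<close>

inductive complex_polynomial_function :: "('a::real_normed_vector \<Rightarrow> complex) \<Rightarrow> bool" where
  const: "complex_polynomial_function (\<lambda>z. c)"
| linear: "bounded_linear l \<Longrightarrow> complex_polynomial_function (\<lambda>z. complex_of_real (l z))"
| add: "complex_polynomial_function p \<Longrightarrow> complex_polynomial_function q \<Longrightarrow>
    complex_polynomial_function (\<lambda>z. p z + q z)"
| mult: "complex_polynomial_function p \<Longrightarrow> complex_polynomial_function q \<Longrightarrow>
    complex_polynomial_function (\<lambda>z. p z * q z)"

lemma complex_polynomial_function_has_derivative:
  "complex_polynomial_function p \<Longrightarrow>
    \<exists>p'. (\<forall>z. (p has_derivative p' z) (at z)) \<and> (\<forall>h. complex_polynomial_function (\<lambda>z. p' z h))"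
proof (induction rule: complex_polynomial_function.induct)
  case (const c)
  show ?case
    by (intro exI[of _ "\<lambda>z h. 0"]) (auto intro: complex_polynomial_function.const)
next
  case (linear l)
  have "bounded_linear (\<lambda>h. complex_of_real (l h))"
    using bounded_linear_compose[OF bounded_linear_of_real linear] by (simp add: o_def)
  then show ?case
    by (intro exI[of _ "\<lambda>z h. complex_of_real (l h)"])
      (auto intro: complex_polynomial_function.const bounded_linear_imp_has_derivative)
next
  case (add p q)
  then obtain p' q' where
    "\<forall>z. (p has_derivative p' z) (at z)" "\<forall>h. complex_polynomial_function (\<lambda>z. p' z h)"
    "\<forall>z. (q has_derivative q' z) (at z)" "\<forall>h. complex_polynomial_function (\<lambda>z. q' z h)"
    by blast
  then show ?case
    by (intro exI[of _ "\<lambda>z h. p' z h + q' z h"])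
      (auto intro: complex_polynomial_function.add has_derivative_add)
next
  case (mult p q)
  then obtain p' q' where
    "\<forall>z. (p has_derivative p' z) (at z)" "\<forall>h. complex_polynomial_function (\<lambda>z. p' z h)"
    "\<forall>z. (q has_derivative q' z) (at z)" "\<forall>h. complex_polynomial_function (\<lambda>z. q' z h)"
    by blast
  with mult.hyps show ?case
    by (intro exI[of _ "\<lambda>z h. p z * q' z h + p' z h * q z"] conjI allI has_derivative_mult
        complex_polynomial_function.add complex_polynomial_function.mult) auto
qed

lemma complex_polynomial_function_growth:
  "complex_polynomial_function p \<Longrightarrow> \<exists>K m. K \<ge> 0 \<and> (\<forall>z. norm (p z) \<le> K * (1 + norm z) ^ m)"
proof (induction rule: complex_polynomial_function.induct)
  case (const c)
  show ?case by (intro exI[of _ "norm c"] exI[of _ 0]) simp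
next
  case (linear l)
  obtain K where K: "K > 0" "\<And>z. norm (l z) \<le> norm z * K"
    using bounded_linear.pos_bounded[OF linear] by blast
  have "norm (complex_of_real (l z)) \<le> K * (1 + norm z) ^ 1" for z
  proof -
    have "norm (complex_of_real (l z)) \<le> norm z * K" using K(2)[of z] by simp
    also have "\<dots> \<le> K * (1 + norm z) ^ 1" using K(1) by (simp add: algebra_simps)
    finally show ?thesis .
  qed
  with K(1) show ?case by (intro exI[of _ K] exI[of _ 1]) auto
next
  case (add p q)
  then obtain K1 m1 K2 m2 where K: "K1 \<ge> 0" "\<And>z. norm (p z) \<le> K1 * (1 + norm z) ^ m1"
    "K2 \<ge> 0" "\<And>z. norm (q z) \<le> K2 * (1 + norm z) ^ m2"
    by blast
  have "norm (p z + q z) \<le> (K1 + K2) * (1 + norm z) ^ (m1 + m2)" for z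
  proof -
    have "(1 + norm z) ^ m1 \<le> (1 + norm z) ^ (m1 + m2)"
      and "(1 + norm z) ^ m2 \<le> (1 + norm z) ^ (m1 + m2)"
      by (intro power_increasing; simp)+
    then have "K1 * (1 + norm z) ^ m1 + K2 * (1 + norm z) ^ m2
        \<le> (K1 + K2) * (1 + norm z) ^ (m1 + m2)"
      using K by (simp add: distrib_right add_mono mult_left_mono)
    then show ?thesis using K(2,4)[of z] norm_triangle_ineq[of "p z" "q z"] by linarith
  qed
  with K show ?case by (intro exI[of _ "K1 + K2"] exI[of _ "m1 + m2"]) auto
next
  case (mult p q)
  then obtain K1 m1 K2 m2 where "K1 \<ge> 0" "\<forall>z. norm (p z) \<le> K1 * (1 + norm z) ^ m1"
    "K2 \<ge> 0" "\<forall>z. norm (q z) \<le> K2 * (1 + norm z) ^ m2"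
    by blast
  then have "norm (p z * q z) \<le> (K1 * K2) * (1 + norm z) ^ (m1 + m2)" for z
    using mult_mono[of "norm (p z)" "K1 * (1 + norm z) ^ m1" "norm (q z)" "K2 * (1 + norm z) ^ m2"]
    by (simp add: norm_mult power_add mult_ac)
  with \<open>K1 \<ge> 0\<close> \<open>K2 \<ge> 0\<close> show ?case by (intro exI[of _ "K1 * K2"] exI[of _ "m1 + m2"]) auto
qed

lemma polynomial_growth_times_exp_decay:
  fixes Q :: "'a::real_normed_vector \<Rightarrow> real" and p :: "'a \<Rightarrow> complex"
  assumes c: "c > 0" and Qc: "\<And>z. Q z \<ge> c * (norm z)\<^sup>2"
    and K: "K \<ge> 0" "\<And>z. norm (p z) \<le> K * (1 + norm z) ^ m"
  shows "\<exists>C. \<forall>z. (1 + norm z) ^ n * cmod (p z * complex_of_real (exp (- Q z))) \<le> C"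
proof (intro exI allI)
  fix z :: 'a
  define B where "B = (2 + real (n + m) / (2 * c)) ^ (n + m)"
  have "(1 + norm z) ^ n * cmod (p z * complex_of_real (exp (- Q z)))
      = (1 + norm z) ^ n * norm (p z) * exp (- Q z)"
    by (simp add: norm_mult)
  also have "\<dots> \<le> (1 + norm z) ^ n * (K * (1 + norm z) ^ m) * exp (- (c * (norm z)\<^sup>2))"
    using K Qc[of z] by (intro mult_mono) auto
  also have "\<dots> = K * ((1 + norm z) ^ (n + m) * exp (- (c * (norm z)\<^sup>2)))"
    by (simp add: power_add algebra_simps)
  also have "\<dots> \<le> K * (B * exp (c * (norm z)\<^sup>2) * exp (- (c * (norm z)\<^sup>2)))"
    unfolding B_def using K(1) c
    by (intro mult_left_mono mult_right_mono one_plus_power_le_exp_power2) auto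
  also have "\<dots> = K * B" by (simp add: exp_minus)
  finally show "(1 + norm z) ^ n * cmod (p z * complex_of_real (exp (- Q z))) \<le> K * B" .
qed

text \<open>The class of functions \<open>p z * exp (- Q z)\<close> with \<open>p\<close> polynomial is closed under partial
  derivatives, so it is a post-fixed point of the coinductive definition of \<^const>\<open>schwartz\<close>.\<close>
lemma schwartz_polynomial_times_exp:
  fixes Q :: "'a::euclidean_space \<Rightarrow> real" and Q' :: "'a \<Rightarrow> 'a \<Rightarrow> real"
  assumes dQ: "\<And>z. (Q has_derivative Q' z) (at z)"
    and linQ: "\<And>h. bounded_linear (\<lambda>z. Q' z h)"
    and c: "c > 0" and Qc: "\<And>z. Q z \<ge> c * (norm z)\<^sup>2"
    and p: "complex_polynomial_function p"
  shows "schwartz (\<lambda>z. p z * complex_of_real (exp (- Q z)))"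
  using p
proof (coinduction arbitrary: p rule: schwartz.coinduct)
  case (schwartz p)
  obtain p' where p': "\<And>z. (p has_derivative p' z) (at z)"
    "\<And>h. complex_polynomial_function (\<lambda>z. p' z h)"
    using complex_polynomial_function_has_derivative[OF schwartz] by blast
  obtain K m where K: "K \<ge> 0" "\<And>z. norm (p z) \<le> K * (1 + norm z) ^ m"
    using complex_polynomial_function_growth[OF schwartz] by blast
  define g' where
    "g' z h = (p' z h - p z * complex_of_real (Q' z h)) * complex_of_real (exp (- Q z))" for z h
  have "((\<lambda>z. complex_of_real (exp (- Q z))) has_derivative
      (\<lambda>h. complex_of_real (- Q' z h * exp (- Q z)))) (at z)" for z
    by (rule has_derivative_of_real[OF has_derivative_exp[OF has_derivative_minus[OF dQ]]])
  then have derivative: "((\<lambda>z. p z * complex_of_real (exp (- Q z))) has_derivative g' z) (at z)"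
    for z
    by (rule has_derivative_eq_rhs[OF has_derivative_mult[OF p'(1)]])
       (auto simp: g'_def fun_eq_iff algebra_simps)
  have decay: "\<exists>C. \<forall>z. (1 + norm z) ^ n * cmod (p z * complex_of_real (exp (- Q z))) \<le> C" for n
    using polynomial_growth_times_exp_decay[OF c Qc K] by blast
  have partials: "\<exists>q. (\<lambda>z. g' z b) = (\<lambda>z. q z * complex_of_real (exp (- Q z)))
      \<and> complex_polynomial_function q" for b
  proof (intro exI conjI)
    show "complex_polynomial_function (\<lambda>z. p' z b + (- 1) * (p z * complex_of_real (Q' z b)))"
      by (intro complex_polynomial_function.intros p'(2) schwartz linQ)
  qed (simp add: g'_def fun_eq_iff algebra_simps)
  show ?case
    by (intro exI[of _ "\<lambda>z. p z * complex_of_real (exp (- Q z))"] exI[of _ g']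
        conjI refl allI impI disjI1 derivative decay partials)
qed

section \<open>The Fourier transform of a complex Gaussian\<close>

lemma lborel_integral_translate:
  fixes h :: "'a::euclidean_space \<Rightarrow> complex" assumes [measurable]: "h \<in> borel_measurable borel"
  shows "(LINT y|lborel. h (y + c)) = (LINT y|lborel. h y)"
proof -
  have "(LINT y|lborel. h y) = integral\<^sup>L (distr lborel borel ((+) c)) h"
    by (simp add: lborel_distr_plus)
  also have "\<dots> = (LINT y|lborel. h (c + y))"
    by (subst integral_distr) auto
  finally show ?thesis by (simp add: add.commute)
qed

lemma norm_add_scaleR_power2:
  fixes y v :: "'a::real_inner"
  shows "(norm (y + t *\<^sub>R v))\<^sup>2 = (norm y)\<^sup>2 + 2 * t * (v \<bullet> y) + t\<^sup>2 * (norm v)\<^sup>2"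
  unfolding power2_norm_eq_inner
  by (simp add: inner_add_left inner_add_right inner_commute algebra_simps power2_eq_square)

lemma norm_add_scaleR_power2_ge:
  fixes y v :: "'a::real_normed_vector" assumes "\<bar>t\<bar> \<le> 1"
  shows "(norm y)\<^sup>2 / 2 - (norm v)\<^sup>2 \<le> (norm (y + t *\<^sub>R v))\<^sup>2"
proof -
  have "norm y \<le> norm (y + t *\<^sub>R v) + norm (t *\<^sub>R v)"
    by (metis add_diff_cancel norm_triangle_ineq4)
  also have "norm (t *\<^sub>R v) \<le> norm v" using assms by (simp add: mult_left_le_one_le)
  finally have "(norm y)\<^sup>2 \<le> (norm (y + t *\<^sub>R v) + norm v)\<^sup>2" by (intro power_mono) auto
  also have "\<dots> \<le> 2 * (norm (y + t *\<^sub>R v))\<^sup>2 + 2 * (norm v)\<^sup>2"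
    using zero_le_power2[of "norm (y + t *\<^sub>R v) - norm v"]
    by (simp add: power2_eq_square algebra_simps)
  finally show ?thesis by simp
qed

lemma norm_mult_inner_add_le:
  fixes a b :: complex and v y :: "'a::real_inner"
  shows "norm (a * complex_of_real (v \<bullet> y) + b) \<le> (norm a * norm v + norm b) * (1 + norm y)"
proof -
  have "norm (a * complex_of_real (v \<bullet> y) + b) \<le> norm a * \<bar>v \<bullet> y\<bar> + norm b"
    using norm_triangle_ineq[of "a * complex_of_real (v \<bullet> y)" b] by (simp add: norm_mult)
  also have "\<dots> \<le> norm a * (norm v * norm y) + norm b"
    by (intro add_right_mono mult_left_mono Cauchy_Schwarz_ineq2) simp
  also have "\<dots> \<le> (norm a * norm v + norm b) * (1 + norm y)"
    using mult_nonneg_nonneg[of "norm b" "norm y"] mult_nonneg_nonneg[of "norm a" "norm v"]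
    by (simp add: algebra_simps)
  finally show ?thesis .
qed

context
  fixes \<alpha> :: complex and v :: "real^2"
  assumes Re_\<alpha>: "Re \<alpha> > 0"
begin

abbreviation modulated_gaussian :: "real \<Rightarrow> real^2 \<Rightarrow> complex" where
  "modulated_gaussian l y \<equiv>
     exp (- \<alpha> * complex_of_real ((norm y)\<^sup>2) - \<i> * complex_of_real l * complex_of_real (v \<bullet> y))"

lemma modulated_gaussian_measurable: "modulated_gaussian l \<in> borel_measurable lborel"
  unfolding measurable_lborel2 by (intro borel_measurable_continuous_onI continuous_intros)

lemma integrable_modulated_gaussian: "integrable lborel (modulated_gaussian l)"
proof (rule Bochner_Integration.integrable_bound)
  show "integrable lborel (\<lambda>y::real^2. exp (- Re \<alpha> * (norm y)\<^sup>2))"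
    by (rule integrable_real_gaussian_real2[OF Re_\<alpha>])
qed (auto intro: modulated_gaussian_measurable)

lemma integrable_inner_times_modulated_gaussian:
  "integrable lborel (\<lambda>y. complex_of_real (v \<bullet> y) * modulated_gaussian l y)"
proof (rule Bochner_Integration.integrable_bound)
  show "integrable lborel (\<lambda>y::real^2. norm v * ((1 + norm y) ^ 1 * exp (- Re \<alpha> * (norm y)\<^sup>2)))"
    using integrable_polynomial_gaussian_real2[OF Re_\<alpha>, of 1] by simp
  show "(\<lambda>y. complex_of_real (v \<bullet> y) * modulated_gaussian l y) \<in> borel_measurable lborel"
    unfolding measurable_lborel2 by (intro borel_measurable_continuous_onI continuous_intros)
  show "AE y in lborel. norm (complex_of_real (v \<bullet> y) * modulated_gaussian l y)
      \<le> norm (norm v * ((1 + norm y) ^ 1 * exp (- Re \<alpha> * (norm y)\<^sup>2)))"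
    using norm_mult_inner_add_le[of 1 v _ 0] by (intro AE_I2) (simp add: norm_mult mult_right_mono)
qed

lemma has_vector_derivative_modulated_gaussian_shift:
  "((\<lambda>t. modulated_gaussian l (y + t *\<^sub>R v)) has_vector_derivative
     - ((2 * \<alpha> * complex_of_real (v \<bullet> (y + t *\<^sub>R v))
         + \<i> * complex_of_real l * complex_of_real ((norm v)\<^sup>2))
        * modulated_gaussian l (y + t *\<^sub>R v))) (at t)"
proof -
  define E where "E z = exp (- \<alpha> * (complex_of_real ((norm y)\<^sup>2)
      + 2 * z * complex_of_real (v \<bullet> y) + z\<^sup>2 * complex_of_real ((norm v)\<^sup>2))
      - \<i> * complex_of_real l * (complex_of_real (v \<bullet> y) + z * complex_of_real ((norm v)\<^sup>2)))" for z
  have shift: "modulated_gaussian l (y + s *\<^sub>R v) = E (complex_of_real s)" for s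
    unfolding E_def norm_add_scaleR_power2
    by (simp add: inner_add_right algebra_simps power2_norm_eq_inner)
  have "(E has_field_derivative
      - ((2 * \<alpha> * complex_of_real (v \<bullet> (y + t *\<^sub>R v))
          + \<i> * complex_of_real l * complex_of_real ((norm v)\<^sup>2))
        * E (complex_of_real t))) (at (complex_of_real t))"
    unfolding E_def
    by (auto intro!: derivative_eq_intros simp: inner_add_right power2_norm_eq_inner algebra_simps)
  from has_vector_derivative_real_field[OF this] show ?thesis
    unfolding shift .
qed

lemma norm_modulated_gaussian_shift_le:
  assumes "\<bar>t\<bar> \<le> 1"
  shows "norm (modulated_gaussian l (y + t *\<^sub>R v))
    \<le> exp (Re \<alpha> * (norm v)\<^sup>2) * exp (- (Re \<alpha> / 2) * (norm y)\<^sup>2)"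
proof -
  have "norm (modulated_gaussian l (y + t *\<^sub>R v)) = exp (- Re \<alpha> * (norm (y + t *\<^sub>R v))\<^sup>2)"
    by simp
  also have "\<dots> \<le> exp (- Re \<alpha> * ((norm y)\<^sup>2 / 2 - (norm v)\<^sup>2))"
    using norm_add_scaleR_power2_ge[OF assms, of y v] Re_\<alpha> by (simp add: mult_left_mono)
  also have "\<dots> = exp (Re \<alpha> * (norm v)\<^sup>2) * exp (- (Re \<alpha> / 2) * (norm y)\<^sup>2)"
    by (simp add: exp_add[symmetric] algebra_simps)
  finally show ?thesis .
qed

lemma norm_directional_derivative_modulated_gaussian_shift_le:
  assumes t: "\<bar>t\<bar> \<le> 1"
  shows "norm ((2 * \<alpha> * complex_of_real (v \<bullet> (y + t *\<^sub>R v))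
      + \<i> * complex_of_real l * complex_of_real ((norm v)\<^sup>2)) * modulated_gaussian l (y + t *\<^sub>R v))
    \<le> (norm (2 * \<alpha>) * norm v + \<bar>l\<bar> * (norm v)\<^sup>2) * (1 + norm v) * exp (Re \<alpha> * (norm v)\<^sup>2)
      * ((1 + norm y) ^ 1 * exp (- (Re \<alpha> / 2) * (norm y)\<^sup>2))"
proof -
  have "norm (y + t *\<^sub>R v) \<le> norm y + norm v"
    using norm_triangle_ineq[of y "t *\<^sub>R v"] mult_left_le_one_le[OF _ _ t, of "norm v"] by simp
  moreover have "(1 + norm v) * (1 + norm y) = 1 + norm y + norm v + norm v * norm y"
    by (simp add: algebra_simps)
  moreover have "0 \<le> norm v * norm y" by simp
  ultimately have "1 + norm (y + t *\<^sub>R v) \<le> (1 + norm v) * (1 + norm y)" by linarith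
  then have "norm ((2 * \<alpha> * complex_of_real (v \<bullet> (y + t *\<^sub>R v))
      + \<i> * complex_of_real l * complex_of_real ((norm v)\<^sup>2)) * modulated_gaussian l (y + t *\<^sub>R v))
    \<le> (norm (2 * \<alpha>) * norm v + \<bar>l\<bar> * (norm v)\<^sup>2) * ((1 + norm v) * (1 + norm y))
      * (exp (Re \<alpha> * (norm v)\<^sup>2) * exp (- (Re \<alpha> / 2) * (norm y)\<^sup>2))"
    unfolding norm_mult using norm_modulated_gaussian_shift_le[OF t]
    by (intro mult_mono order_trans[OF norm_mult_inner_add_le] mult_left_mono)
      (auto simp: norm_mult norm_power)
  then show ?thesis by (simp add: mult_ac)
qed

text \<open>Integration by parts in the direction \<open>v\<close>: the integral of \<open>modulated_gaussian l (y + t v)\<close>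
  does not depend on \<open>t\<close>, so its \<open>t\<close>-derivative at \<open>0\<close> vanishes.\<close>
lemma integral_directional_derivative_modulated_gaussian:
  "(LINT y|lborel. (2 * \<alpha> * complex_of_real (v \<bullet> y)
      + \<i> * complex_of_real l * complex_of_real ((norm v)\<^sup>2)) * modulated_gaussian l y) = 0"
proof -
  define G' where "G' t y = - ((2 * \<alpha> * complex_of_real (v \<bullet> (y + t *\<^sub>R v))
      + \<i> * complex_of_real l * complex_of_real ((norm v)\<^sup>2)) * modulated_gaussian l (y + t *\<^sub>R v))"
    for t y
  define K where "K = (norm (2 * \<alpha>) * norm v + \<bar>l\<bar> * (norm v)\<^sup>2) * (1 + norm v)
      * exp (Re \<alpha> * (norm v)\<^sup>2)"
  have "((\<lambda>t. LINT y|lborel. modulated_gaussian l (y + t *\<^sub>R v)) has_vector_derivative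
      (LINT y|lborel. G' 0 y)) (at 0)"
  proof (rule has_vector_derivative_integral_parametric[where r=1])
    show "integrable lborel (\<lambda>y::real^2. K * ((1 + norm y) ^ 1 * exp (- (Re \<alpha> / 2) * (norm y)\<^sup>2)))"
      using integrable_polynomial_gaussian_real2[of "Re \<alpha> / 2" 1] Re_\<alpha> by simp
    show "norm (G' t y) \<le> K * ((1 + norm y) ^ 1 * exp (- (Re \<alpha> / 2) * (norm y)\<^sup>2))"
      if "t \<in> ball 0 1" for t y
      using norm_directional_derivative_modulated_gaussian_shift_le[of t y l] that
      by (simp add: G'_def K_def)
    show "integrable lborel (\<lambda>y. modulated_gaussian l (y + 0 *\<^sub>R v))"
      using integrable_modulated_gaussian by simp
    show "(\<lambda>y. modulated_gaussian l (y + t *\<^sub>R v)) \<in> borel_measurable lborel" for t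
      unfolding measurable_lborel2 by (intro borel_measurable_continuous_onI continuous_intros)
    show "G' 0 \<in> borel_measurable lborel"
      unfolding measurable_lborel2 G'_def
      by (intro borel_measurable_continuous_onI continuous_intros)
  qed (use has_vector_derivative_modulated_gaussian_shift in \<open>auto simp: G'_def\<close>)
  moreover have "(LINT y|lborel. modulated_gaussian l (y + t *\<^sub>R v))
      = (LINT y|lborel. modulated_gaussian l y)" for t
    by (rule lborel_integral_translate) (use modulated_gaussian_measurable in simp)
  ultimately have "((\<lambda>t. LINT y|lborel. modulated_gaussian l y) has_vector_derivative
      (LINT y|lborel. G' 0 y)) (at 0)"
    by simp
  then have "(LINT y|lborel. G' 0 y) = 0"
    using vector_derivative_unique_at has_vector_derivative_const by blast
  then show ?thesis by (simp add: G'_def)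
qed

lemma has_vector_derivative_integral_modulated_gaussian:
  "((\<lambda>l. LINT y|lborel. modulated_gaussian l y) has_vector_derivative
     - complex_of_real l * complex_of_real ((norm v)\<^sup>2) / (2 * \<alpha>)
       * (LINT y|lborel. modulated_gaussian l y)) (at l)"
proof -
  have "((\<lambda>l. LINT y|lborel. modulated_gaussian l y) has_vector_derivative
      (LINT y|lborel. - \<i> * (complex_of_real (v \<bullet> y) * modulated_gaussian l y))) (at l)"
  proof (rule has_vector_derivative_integral_parametric[where r=1])
    show "integrable lborel (\<lambda>y::real^2. norm v * ((1 + norm y) ^ 1 * exp (- Re \<alpha> * (norm y)\<^sup>2)))"
      using integrable_polynomial_gaussian_real2[OF Re_\<alpha>, of 1] by simp
    show "((\<lambda>t. modulated_gaussian t y) has_vector_derivative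
        - \<i> * (complex_of_real (v \<bullet> y) * modulated_gaussian t y)) (at t)" for t y
    proof -
      have "((\<lambda>z. exp (- \<alpha> * complex_of_real ((norm y)\<^sup>2) - \<i> * z * complex_of_real (v \<bullet> y)))
          has_field_derivative - \<i> * (complex_of_real (v \<bullet> y) * modulated_gaussian t y))
          (at (complex_of_real t))"
        by (auto intro!: derivative_eq_intros simp: algebra_simps)
      from has_vector_derivative_real_field[OF this] show ?thesis by simp
    qed
    show "norm (- \<i> * (complex_of_real (v \<bullet> y) * modulated_gaussian t y))
        \<le> norm v * ((1 + norm y) ^ 1 * exp (- Re \<alpha> * (norm y)\<^sup>2))" for t y
      using norm_mult_inner_add_le[of 1 v y 0] by (simp add: norm_mult mult_right_mono mult.assoc)
    show "(\<lambda>y. - \<i> * (complex_of_real (v \<bullet> y) * modulated_gaussian l y)) \<in> borel_measurable lborel"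
      unfolding measurable_lborel2 by (intro borel_measurable_continuous_onI continuous_intros)
    show "integrable lborel (modulated_gaussian l)" by (rule integrable_modulated_gaussian)
  qed (auto intro: modulated_gaussian_measurable)
  moreover have "2 * \<alpha> * (LINT y|lborel. complex_of_real (v \<bullet> y) * modulated_gaussian l y)
      = - (\<i> * complex_of_real l * complex_of_real ((norm v)\<^sup>2)
          * (LINT y|lborel. modulated_gaussian l y))"
    using integral_directional_derivative_modulated_gaussian[of l]
      integrable_inner_times_modulated_gaussian[of l] integrable_modulated_gaussian[of l]
    by (simp add: algebra_simps eq_neg_iff_add_eq_0)
  moreover have "- \<i> * J = - c / (2 * \<alpha>) * P" if "2 * \<alpha> * J = - (\<i> * c * P)" for J P c :: complex
  proof -
    have "2 * \<alpha> * (- \<i> * J) = - \<i> * (2 * \<alpha> * J)"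
      by (simp only: mult_ac mult_minus_left mult_minus_right)
    also have "\<dots> = - c * P" unfolding that by (simp add: mult.assoc[symmetric])
    finally show ?thesis using Re_\<alpha> by (auto simp: eq_divide_eq mult_ac)
  qed
  ultimately show ?thesis by (simp add: mult.assoc)
qed

lemma integral_modulated_gaussian:
  "(LINT y|lborel. modulated_gaussian l y)
     = pi / \<alpha> * exp (- (complex_of_real l)\<^sup>2 * complex_of_real ((norm v)\<^sup>2) / (4 * \<alpha>))"
proof -
  have "\<alpha> \<noteq> 0" using Re_\<alpha> by auto
  define Nv where "Nv = complex_of_real ((norm v)\<^sup>2)"
  define \<Phi> where "\<Phi> l = (LINT y|lborel. modulated_gaussian l y)" for l
  define H where "H l = \<Phi> l * exp ((complex_of_real l)\<^sup>2 * Nv / (4 * \<alpha>))" for l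
  have "(H has_vector_derivative 0) (at l)" for l
  proof -
    have "((\<lambda>z. exp (z\<^sup>2 * Nv / (4 * \<alpha>))) has_field_derivative
        (2 * complex_of_real l * Nv / (4 * \<alpha>)) * exp ((complex_of_real l)\<^sup>2 * Nv / (4 * \<alpha>)))
        (at (complex_of_real l))"
      using \<open>\<alpha> \<noteq> 0\<close> by (auto intro!: derivative_eq_intros simp: algebra_simps)
    from has_vector_derivative_mult[OF has_vector_derivative_integral_modulated_gaussian
        has_vector_derivative_real_field[OF this]]
    show ?thesis
      unfolding H_def \<Phi>_def Nv_def using \<open>\<alpha> \<noteq> 0\<close>
      by (auto simp: field_simps elim!: has_vector_derivative_eq_rhs)
  qed
  then obtain c where "H l = c" for l
    using has_derivative_zero_constant[of UNIV H] by (auto simp: has_vector_derivative_def)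
  then have "H l = H 0" by simp
  also have "H 0 = pi / \<alpha>"
    unfolding H_def \<Phi>_def using integral_gaussian_real2[OF Re_\<alpha>] by simp
  finally have "\<Phi> l * exp ((complex_of_real l)\<^sup>2 * Nv / (4 * \<alpha>)) = pi / \<alpha>"
    unfolding H_def .
  then have "\<Phi> l = pi / \<alpha> * exp (- ((complex_of_real l)\<^sup>2 * Nv / (4 * \<alpha>)))"
    by (metis exp_minus_inverse mult.assoc mult_1_right)
  then show ?thesis unfolding \<Phi>_def Nv_def by simp
qed

end

lemma integral_gaussian_fourier_real2:
  fixes \<alpha> :: complex and v :: "real^2" assumes "Re \<alpha> > 0"
  shows "(LINT y|lborel. exp (- \<alpha> * complex_of_real ((norm y)\<^sup>2) - \<i> * complex_of_real (v \<bullet> y)))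
    = pi / \<alpha> * exp (- complex_of_real ((norm v)\<^sup>2) / (4 * \<alpha>))"
  using integral_modulated_gaussian[OF assms, where v=v and l=1] by simp

section \<open>Free evolution of a Gaussian\<close>

definition gaussian :: "real^2 \<Rightarrow> complex" where
  "gaussian y = complex_of_real (exp (- (norm y)\<^sup>2))"

lemma schrod_prop_mult: "schrod_prop \<tau> (\<lambda>y. c * f y) x = c * schrod_prop \<tau> f x"
  by (simp add: schrod_prop_def mult.left_commute)

lemma schrod_prop_gaussian:
  "schrod_prop \<tau> gaussian x
     = exp (- complex_of_real ((norm x)\<^sup>2) / (1 + 4 * \<i> * \<tau>)) / (1 + 4 * \<i> * \<tau>)"
proof (cases "\<tau> = 0")
  case True
  then show ?thesis by (simp add: schrod_prop_def gaussian_def exp_of_real[symmetric])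
next
  case False
  define \<alpha> where "\<alpha> = 1 - \<i> / (4 * complex_of_real \<tau>)"
  define v where "v = (1 / (2 * \<tau>)) *\<^sub>R x"
  define w where "w = 1 + 4 * \<i> * complex_of_real \<tau>"
  define E where "E = \<i> * complex_of_real ((norm x)\<^sup>2 / (4 * \<tau>))"
  have "Re \<alpha> > 0" by (simp add: \<alpha>_def)
  have "w \<noteq> 0" "4 * complex_of_real \<tau> - \<i> \<noteq> 0" by (simp_all add: w_def complex_eq_iff)
  have kernel: "exp (\<i> * complex_of_real ((norm (x - y))\<^sup>2 / (4 * \<tau>))) * gaussian y
      = exp E * exp (- \<alpha> * complex_of_real ((norm y)\<^sup>2) - \<i> * complex_of_real (v \<bullet> y))" for y
  proof -
    have n: "(norm (x - y))\<^sup>2 = (norm x)\<^sup>2 - 2 * (x \<bullet> y) + (norm y)\<^sup>2"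
      unfolding power2_norm_eq_inner by (simp add: inner_diff_left inner_diff_right inner_commute)
    have "\<i> * complex_of_real ((norm (x - y))\<^sup>2 / (4 * \<tau>)) + complex_of_real (- (norm y)\<^sup>2)
        = E + (- \<alpha> * complex_of_real ((norm y)\<^sup>2) - \<i> * complex_of_real (v \<bullet> y))"
      unfolding n using False by (simp add: E_def \<alpha>_def v_def field_simps)
    then show ?thesis
      by (simp only: gaussian_def exp_of_real[symmetric] exp_add[symmetric])
  qed
  have "schrod_prop \<tau> gaussian x = 1 / (4 * pi * \<i> * \<tau>) *
      (LINT y|lborel.
        exp E * exp (- \<alpha> * complex_of_real ((norm y)\<^sup>2) - \<i> * complex_of_real (v \<bullet> y)))"
    unfolding schrod_prop_def kernel using False by simp
  also have "\<dots> = 1 / (4 * pi * \<i> * \<tau>) *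
      (exp E * (pi / \<alpha> * exp (- complex_of_real ((norm v)\<^sup>2) / (4 * \<alpha>))))"
    by (simp only: integral_mult_right_zero integral_gaussian_fourier_real2[OF \<open>Re \<alpha> > 0\<close>])
  also have "\<dots> = exp E * exp (- complex_of_real ((norm v)\<^sup>2) / (4 * \<alpha>)) / w"
  proof -
    have "1 / (4 * pi * \<i> * \<tau>) * (A * (pi / \<alpha> * B)) = A * B / w" for A B :: complex
      using False \<open>w \<noteq> 0\<close> \<open>4 * complex_of_real \<tau> - \<i> \<noteq> 0\<close>
      by (simp add: \<alpha>_def w_def field_simps)
    then show ?thesis .
  qed
  also have "exp E * exp (- complex_of_real ((norm v)\<^sup>2) / (4 * \<alpha>))
      = exp (E + - complex_of_real ((norm v)\<^sup>2) / (4 * \<alpha>))"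
    by (rule mult_exp_exp)
  also have "E + - complex_of_real ((norm v)\<^sup>2) / (4 * \<alpha>) = - complex_of_real ((norm x)\<^sup>2) / w"
    using False \<open>w \<noteq> 0\<close> \<open>4 * complex_of_real \<tau> - \<i> \<noteq> 0\<close>
    by (simp add: E_def \<alpha>_def v_def w_def field_simps power2_eq_square)
  finally show ?thesis by (simp add: w_def)
qed

lemma norm_exp_minus_one_le:
  fixes z :: complex assumes z: "norm z \<le> 1/4"
  shows "norm (exp z - 1) \<le> 2 * norm z"
proof -
  have der: "((\<lambda>s. exp (complex_of_real s * z)) has_vector_derivative
      z * exp (complex_of_real s * z)) (at s)" for s
  proof -
    have "((\<lambda>w. exp (w * z)) has_field_derivative z * exp (complex_of_real s * z))
        (at (complex_of_real s))"
      by (auto intro!: derivative_eq_intros)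
    from has_vector_derivative_real_field[OF this] show ?thesis .
  qed
  have bd: "norm (z * exp (complex_of_real s * z)) \<le> 2 * norm z" if "s \<in> ball 0 2" for s
  proof -
    have "\<bar>s\<bar> * norm z \<le> 2 * (1/4)" by (rule mult_mono) (use that z in auto)
    then have "norm (complex_of_real s * z) \<le> 2 * (1/4)" by (simp add: norm_mult)
    then have "norm (exp (complex_of_real s * z)) \<le> 1 + 2 * norm (complex_of_real s * z)"
      by (intro exp_bound_lemma) simp
    also have "\<dots> \<le> 2" using \<open>norm (complex_of_real s * z) \<le> 2 * (1/4)\<close> by simp
    finally show ?thesis by (simp add: norm_mult mult.commute mult_left_mono)
  qed
  have "norm ((\<lambda>s. exp (complex_of_real s * z)) 1 - (\<lambda>s. exp (complex_of_real s * z)) 0)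
      \<le> 2 * norm z * \<bar>1 - 0\<bar>"
    by (rule norm_diff_le_of_vector_derivative_bound[where r=2]) (use der bd in auto)
  then show ?thesis by simp
qed

lemma norm_schrod_prop_gaussian_le: "norm (schrod_prop \<tau> gaussian x) \<le> 1"
proof -
  define w where "w = 1 + 4 * \<i> * complex_of_real \<tau>"
  have "1 \<le> norm w" using abs_Re_le_cmod[of w] by (simp add: w_def)
  moreover have "norm (exp (- complex_of_real ((norm x)\<^sup>2) / w)) \<le> 1"
    by (simp add: w_def Re_divide)
  ultimately show ?thesis
    unfolding schrod_prop_gaussian w_def[symmetric] norm_divide
    using frac_le[of 1 "norm (exp (- complex_of_real ((norm x)\<^sup>2) / w))" 1 "norm w"] by simp
qed

lemma inverse_10_add_inverse_8_power2_le:
  fixes \<tau> :: real assumes \<tau>: "\<tau> \<ge> 1"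
  shows "1 / (10 * \<tau>) + 1 / (8 * \<tau>\<^sup>2) \<le> 4 * \<tau> / (1 + 16 * \<tau>\<^sup>2)"
proof -
  have "\<tau> \<le> \<tau>\<^sup>2" "\<tau>\<^sup>2 \<le> \<tau> ^ 3"
    using mult_left_mono[OF \<tau>, of \<tau>] mult_left_mono[OF \<tau>, of "\<tau>\<^sup>2"] \<tau>
    by (simp_all add: power2_eq_square power3_eq_cube)
  then have "80 * \<tau>\<^sup>2 + 4 * \<tau> + 5 - 96 * \<tau> ^ 3 \<le> 0" using \<tau> by linarith
  moreover have "0 < 40 * \<tau>\<^sup>2 * (1 + 16 * \<tau>\<^sup>2)" using \<tau> by (simp add: add_pos_nonneg)
  ultimately have "(80 * \<tau>\<^sup>2 + 4 * \<tau> + 5 - 96 * \<tau> ^ 3) / (40 * \<tau>\<^sup>2 * (1 + 16 * \<tau>\<^sup>2)) \<le> 0"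
    by (rule divide_nonpos_pos)
  moreover have "1 + 16 * \<tau>\<^sup>2 \<noteq> 0" "\<tau> \<noteq> 0"
    using \<tau> add_pos_nonneg[of 1 "16 * \<tau>\<^sup>2"] by auto
  then have "1 / (10 * \<tau>) + 1 / (8 * \<tau>\<^sup>2) - 4 * \<tau> / (1 + 16 * \<tau>\<^sup>2)
      = (80 * \<tau>\<^sup>2 + 4 * \<tau> + 5 - 96 * \<tau> ^ 3) / (40 * \<tau>\<^sup>2 * (1 + 16 * \<tau>\<^sup>2))"
    by (simp add: divide_simps) (simp add: algebra_simps power2_eq_square power3_eq_cube)
  ultimately show ?thesis by linarith
qed

lemma Im_schrod_prop_gaussian_le:
  assumes \<tau>: "\<tau> \<ge> 1" and x: "norm x \<le> 1"
  shows "Im (schrod_prop \<tau> gaussian x) \<le> - 1 / (10 * \<tau>)"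
proof -
  define w where "w = 1 + 4 * \<i> * complex_of_real \<tau>"
  define z where "z = - complex_of_real ((norm x)\<^sup>2) / w"
  have "4 * \<tau> \<le> norm w" using abs_Im_le_cmod[of w] \<tau> by (simp add: w_def)
  have "norm z \<le> 1 / (4 * \<tau>)"
  proof -
    have "(norm x)\<^sup>2 \<le> 1" using x by (simp add: power_le_one)
    then have "norm z \<le> 1 / norm w" by (simp add: z_def norm_divide norm_power divide_right_mono)
    also have "\<dots> \<le> 1 / (4 * \<tau>)" using \<open>4 * \<tau> \<le> norm w\<close> \<tau> by (simp add: frac_le)
    finally show ?thesis .
  qed
  moreover have "1 / (4 * \<tau>) \<le> 1 / 4" using \<tau> by simp
  ultimately have "norm (exp z - 1) \<le> 2 * (1 / (4 * \<tau>))"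
    using norm_exp_minus_one_le[of z] by simp
  then have "norm ((exp z - 1) / w) \<le> 2 * (1 / (4 * \<tau>)) / (4 * \<tau>)"
    unfolding norm_divide using \<open>4 * \<tau> \<le> norm w\<close> \<tau> by (intro frac_le) auto
  then have "Im ((exp z - 1) / w) \<le> 1 / (8 * \<tau>\<^sup>2)"
    using abs_Im_le_cmod[of "(exp z - 1) / w"] by (simp add: power2_eq_square)
  moreover have "Im (1 / w) = - 4 * \<tau> / (1 + 16 * \<tau>\<^sup>2)"
    by (simp add: w_def Im_divide cmod_def power2_eq_square)
  moreover have "schrod_prop \<tau> gaussian x = 1 / w + (exp z - 1) / w"
    by (simp add: schrod_prop_gaussian z_def w_def diff_divide_distrib)
  moreover have "- 4 * \<tau> / (1 + 16 * \<tau>\<^sup>2) + 1 / (8 * \<tau>\<^sup>2) \<le> - 1 / (10 * \<tau>)"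
    using inverse_10_add_inverse_8_power2_le[OF \<tau>] by simp
  ultimately show ?thesis by simp
qed

section \<open>The counterexample\<close>

definition gaussian_source :: "real \<Rightarrow> real \<Rightarrow> real^2 \<Rightarrow> complex" where
  "gaussian_source N s y = complex_of_real (exp (- s\<^sup>2 / (2 * N\<^sup>2))) * gaussian y"

lemma schwartz_gaussian_source:
  assumes N: "N > 0"
  shows "schwartz (\<lambda>z. gaussian_source N (fst z) (snd z))"
proof -
  define a where "a = 1 / (2 * N\<^sup>2)"
  define Q where "Q z = a * (fst z * fst z) + snd z \<bullet> snd z" for z :: "real \<times> (real^2)"
  define Q' where "Q' z h = a * (fst h * fst z + fst z * fst h) + (snd h \<bullet> snd z + snd z \<bullet> snd h)"
    for z h :: "real \<times> (real^2)"
  have "(Q has_derivative Q' z) (at z)" for z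
    unfolding Q_def[abs_def] Q'_def by (auto intro!: derivative_eq_intros)
  moreover have "bounded_linear (\<lambda>z. Q' z h)" for h
    unfolding linear_conv_bounded_linear[symmetric] Q'_def
    by (rule linearI) (auto simp: algebra_simps inner_add_left inner_add_right)
  moreover have "min a 1 > 0" using N by (simp add: a_def)
  moreover have "Q z \<ge> min a 1 * (norm z)\<^sup>2" for z
  proof (cases z)
    case (Pair s x)
    have "min a 1 * (norm z)\<^sup>2 = min a 1 * s\<^sup>2 + min a 1 * (norm x)\<^sup>2"
      by (simp add: Pair norm_Pair algebra_simps)
    also have "\<dots> \<le> a * s\<^sup>2 + 1 * (norm x)\<^sup>2"
      by (intro add_mono mult_right_mono) auto
    also have "\<dots> = Q z"
      by (simp add: Q_def Pair power2_eq_square dot_square_norm)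
    finally show ?thesis .
  qed
  ultimately have "schwartz (\<lambda>z. 1 * complex_of_real (exp (- Q z)))"
    by (rule schwartz_polynomial_times_exp[where p="\<lambda>z. 1",
          OF _ _ _ _ complex_polynomial_function.const])
  moreover have "(\<lambda>z. 1 * complex_of_real (exp (- Q z))) = (\<lambda>z. gaussian_source N (fst z) (snd z))"
    by (auto simp: fun_eq_iff Q_def a_def gaussian_source_def gaussian_def power2_eq_square
        dot_square_norm mult_exp_exp simp flip: of_real_mult)
  ultimately show ?thesis by simp
qed

lemma L1_norm_gaussian_source:
  "L1_norm (gaussian_source N s) = ennreal (exp (- s\<^sup>2 / (2 * N\<^sup>2)) * pi)"
proof -
  have "L1_norm (gaussian_source N s)
      = (\<integral>\<^sup>+ y. ennreal (exp (- s\<^sup>2 / (2 * N\<^sup>2))) * ennreal (exp (- (norm (y::real^2))\<^sup>2))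
          \<partial>lborel)"
    unfolding L1_norm_def gaussian_source_def gaussian_def
    by (simp add: norm_mult ennreal_mult[symmetric])
  also have "\<dots> = ennreal (exp (- s\<^sup>2 / (2 * N\<^sup>2))) * ennreal pi"
    by (subst nn_integral_cmult) (auto simp: nn_integral_gaussian_real2)
  finally show ?thesis by (simp add: ennreal_mult)
qed

lemma nn_integral_L1_norm_gaussian_source:
  assumes N: "N > 0"
  shows "(\<integral>\<^sup>+ s. (L1_norm (gaussian_source N s))\<^sup>2 \<partial>lborel) = ennreal (pi\<^sup>2 * sqrt pi * N)"
proof -
  define \<sigma> where "\<sigma> = N / sqrt 2"
  have "\<sigma> > 0" "2 * \<sigma>\<^sup>2 = N\<^sup>2" using N by (simp_all add: \<sigma>_def power_divide)
  have "(L1_norm (gaussian_source N s))\<^sup>2 = ennreal (pi\<^sup>2) * ennreal (exp (- s\<^sup>2 / (2 * \<sigma>\<^sup>2)))"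
    for s
  proof -
    have "(exp (- s\<^sup>2 / (2 * N\<^sup>2)))\<^sup>2 = exp (- s\<^sup>2 / (2 * \<sigma>\<^sup>2))"
      unfolding \<open>2 * \<sigma>\<^sup>2 = N\<^sup>2\<close> by (simp add: exp_add[symmetric] power2_eq_square)
    then show ?thesis
      unfolding L1_norm_gaussian_source
      by (simp add: ennreal_power ennreal_mult[symmetric] power_mult_distrib)
  qed
  then have "(\<integral>\<^sup>+ s. (L1_norm (gaussian_source N s))\<^sup>2 \<partial>lborel)
      = ennreal (pi\<^sup>2) * (\<integral>\<^sup>+ s. ennreal (exp (- s\<^sup>2 / (2 * \<sigma>\<^sup>2))) \<partial>lborel)"
    by (simp add: nn_integral_cmult)
  also have "(\<integral>\<^sup>+ s. ennreal (exp (- s\<^sup>2 / (2 * \<sigma>\<^sup>2))) \<partial>lborel)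
      = ennreal (sqrt (2 * pi * \<sigma>\<^sup>2))"
    using integrable_gaussian_real[OF \<open>\<sigma> > 0\<close>] integral_gaussian_real[OF \<open>\<sigma> > 0\<close>]
    by (subst nn_integral_eq_integral) auto
  also have "sqrt (2 * pi * \<sigma>\<^sup>2) = sqrt pi * N"
  proof -
    have e: "2 * pi * \<sigma>\<^sup>2 = pi * N\<^sup>2"
      unfolding \<open>2 * \<sigma>\<^sup>2 = N\<^sup>2\<close>[symmetric] by (simp only: mult_ac)
    show ?thesis unfolding e using N by (simp add: real_sqrt_mult)
  qed
  finally show ?thesis using N by (simp add: ennreal_mult' mult.assoc)
qed

lemma set_integral_inverse_distance:
  fixes a b t :: real
  assumes "a \<le> b" "b < t"
  shows "(LINT s:{a..b}|lborel. 1 / (t - s)) = ln (t - a) - ln (t - b)"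
proof -
  have "(LBINT s=ereal a..ereal b. 1 / (t - s)) = (- ln (t - b)) - (- ln (t - a))"
  proof (rule interval_integral_FTC_finite)
    show "continuous_on {min a b..max a b} (\<lambda>s. 1 / (t - s))"
      using assms by (intro continuous_intros) auto
    show "((\<lambda>s. - ln (t - s)) has_vector_derivative 1 / (t - s)) (at s within {min a b..max a b})"
      if "min a b \<le> s" "s \<le> max a b" for s
      using that assms
      by (auto intro!: derivative_eq_intros
          simp: has_real_derivative_iff_has_vector_derivative[symmetric])
  qed
  then show ?thesis using assms by (simp add: interval_integral_Icc)
qed

lemma duhamel_gaussian_source:
  "duhamel (gaussian_source N) t x
     = (LINT s:{..<t}|lborel.
          complex_of_real (exp (- s\<^sup>2 / (2 * N\<^sup>2))) * schrod_prop (t - s) gaussian x)"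
  unfolding duhamel_def gaussian_source_def[abs_def] schrod_prop_mult ..

lemma set_integrable_duhamel_gaussian_source:
  assumes "N > 0"
  shows "set_integrable lborel {..<t}
    (\<lambda>s. complex_of_real (exp (- s\<^sup>2 / (2 * N\<^sup>2))) * schrod_prop (t - s) gaussian x)"
  unfolding set_integrable_def
proof (rule Bochner_Integration.integrable_bound)
  show "integrable lborel (\<lambda>s. exp (- s\<^sup>2 / (2 * N\<^sup>2)))"
    by (rule integrable_gaussian_real) fact
  show "(\<lambda>s. indicator {..<t} s *\<^sub>R
      (complex_of_real (exp (- s\<^sup>2 / (2 * N\<^sup>2))) * schrod_prop (t - s) gaussian x))
      \<in> borel_measurable lborel"
    unfolding schrod_prop_gaussian by measurable
  show "AE s in lborel. norm (indicator {..<t} s *\<^sub>R (complex_of_real (exp (- s\<^sup>2 / (2 * N\<^sup>2)))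
      * schrod_prop (t - s) gaussian x)) \<le> norm (exp (- s\<^sup>2 / (2 * N\<^sup>2)))"
    using norm_schrod_prop_gaussian_le
    by (intro AE_I2) (simp add: norm_mult indicator_def mult_left_le)
qed

definition log_minorant :: "real \<Rightarrow> real \<Rightarrow> real \<Rightarrow> real \<Rightarrow> real" where
  "log_minorant c N t s = indicator {-N..t-1} s * (c / (t - s)) - indicator {t-1<..<t} s"

lemma duhamel_gaussian_source_integrand_ge:
  assumes N: "N \<ge> 1" and t: "0 \<le> t" "t \<le> N" and x: "norm x \<le> 1" and s: "s < t"
  shows "log_minorant (exp (- 1/2) / 10) N t s
    \<le> exp (- s\<^sup>2 / (2 * N\<^sup>2)) * - Im (schrod_prop (t - s) gaussian x)"
proof -
  define \<phi> where "\<phi> = exp (- s\<^sup>2 / (2 * N\<^sup>2))"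
  define U where "U = schrod_prop (t - s) gaussian x"
  have "0 \<le> \<phi>" "\<phi> \<le> 1" by (simp_all add: \<phi>_def)
  consider "s < -N" | "-N \<le> s" "s \<le> t - 1" | "t - 1 < s" by linarith
  then have "log_minorant (exp (- 1/2) / 10) N t s \<le> \<phi> * - Im U"
  proof cases
    case 1
    then have "1 \<le> t - s" using t N by linarith
    then have "Im U \<le> - 1 / (10 * (t - s))"
      unfolding U_def using x by (rule Im_schrod_prop_gaussian_le)
    also have "\<dots> \<le> 0" using \<open>1 \<le> t - s\<close> by simp
    finally have "0 \<le> \<phi> * - Im U" using \<open>0 \<le> \<phi>\<close> by (simp add: mult_nonneg_nonpos)
    with 1 t show ?thesis by (simp add: log_minorant_def indicator_def)
  next
    case 2
    have "\<bar>s\<bar> \<le> \<bar>N\<bar>" using 2 t by (simp add: abs_le_iff)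
    then have "s\<^sup>2 \<le> N\<^sup>2" by (simp add: abs_le_square_iff)
    then have "exp (- 1/2) \<le> \<phi>" using N by (simp add: \<phi>_def divide_simps)
    moreover have "1 / (10 * (t - s)) \<le> - Im U"
      using Im_schrod_prop_gaussian_le[of "t - s" x] 2 x by (simp add: U_def)
    ultimately have "exp (- 1/2) * (1 / (10 * (t - s))) \<le> \<phi> * - Im U"
      using 2 \<open>0 \<le> \<phi>\<close> by (intro mult_mono) auto
    with 2 show ?thesis by (simp add: log_minorant_def indicator_def)
  next
    case 3
    have "- 1 \<le> - Im U"
      using abs_Im_le_cmod[of U] norm_schrod_prop_gaussian_le[of "t - s" x] by (simp add: U_def)
    then have "\<phi> * - 1 \<le> \<phi> * - Im U" using \<open>0 \<le> \<phi>\<close> by (rule mult_left_mono)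
    with \<open>\<phi> \<le> 1\<close> have "- 1 \<le> \<phi> * - Im U" by linarith
    with 3 s show ?thesis by (simp add: log_minorant_def indicator_def)
  qed
  then show ?thesis by (simp add: \<phi>_def U_def)
qed

lemma
  fixes c N t :: real assumes "- N \<le> t - 1"
  shows set_integrable_log_minorant: "set_integrable lborel {..<t} (log_minorant c N t)"
    and set_integral_log_minorant:
      "(LINT s:{..<t}|lborel. log_minorant c N t s) = c * ln (t + N) - 1"
proof -
  have far: "set_integrable lborel {-N..t-1} (\<lambda>s. c / (t - s))"
    by (rule borel_integrable_atLeastAtMost') (auto intro!: continuous_intros)
  have near: "set_integrable lborel {t-1<..<t} (\<lambda>s. 1::real)"
    by (simp add: set_integrable_def)
  have restrict: "indicator {..<t} s *\<^sub>R log_minorant c N t s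
      = indicator {-N..t-1} s *\<^sub>R (c / (t - s)) - indicator {t-1<..<t} s *\<^sub>R (1::real)" for s
    by (auto simp: log_minorant_def indicator_def)
  show "set_integrable lborel {..<t} (log_minorant c N t)"
    using far near unfolding set_integrable_def restrict
    by (rule Bochner_Integration.integrable_diff)
  have "(LINT s:{..<t}|lborel. log_minorant c N t s)
      = (LINT s:{-N..t-1}|lborel. c / (t - s)) - (LINT s:{t-1<..<t}|lborel. (1::real))"
    using far near unfolding set_integrable_def set_lebesgue_integral_def restrict
    by (rule Bochner_Integration.integral_diff)
  also have "(LINT s:{-N..t-1}|lborel. c / (t - s)) = (LINT s:{-N..t-1}|lborel. c * (1 / (t - s)))"
    by simp
  also have "\<dots> = c * (LINT s:{-N..t-1}|lborel. 1 / (t - s))"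
    by (rule set_integral_mult_right)
  also have "(LINT s:{-N..t-1}|lborel. 1 / (t - s)) = ln (t + N)"
    using set_integral_inverse_distance[of "-N" "t - 1" t] assms by simp
  also have "(LINT s:{t-1<..<t}|lborel. (1::real)) = 1"
    by (simp add: set_lebesgue_integral_def)
  finally show "(LINT s:{..<t}|lborel. log_minorant c N t s) = c * ln (t + N) - 1" .
qed

lemma neg_Im_duhamel_gaussian_source_ge:
  assumes N: "N \<ge> 1" and t: "0 \<le> t" "t \<le> N" and x: "norm x \<le> 1"
  shows "exp (- 1/2) / 10 * ln (t + N) - 1 \<le> - Im (duhamel (gaussian_source N) t x)"
proof -
  define c :: real where "c = exp (- 1/2) / 10"
  let ?f = "\<lambda>s. complex_of_real (exp (- s\<^sup>2 / (2 * N\<^sup>2))) * schrod_prop (t - s) gaussian x"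
  have "- N \<le> t - 1" using N t by linarith
  have f: "set_integrable lborel {..<t} ?f"
    using N by (intro set_integrable_duhamel_gaussian_source) simp
  have "c * ln (t + N) - 1 = (LINT s:{..<t}|lborel. log_minorant c N t s)"
    using set_integral_log_minorant[OF \<open>- N \<le> t - 1\<close>] by simp
  also have "\<dots> \<le> (LINT s:{..<t}|lborel. - Im (?f s))"
  proof (rule set_integral_mono[OF set_integrable_log_minorant[OF \<open>- N \<le> t - 1\<close>]])
    show "set_integrable lborel {..<t} (\<lambda>s. - Im (?f s))"
      using f unfolding set_integrable_def by (auto dest: integrable_Im simp: indicator_def)
    show "log_minorant c N t s \<le> - Im (?f s)" if "s \<in> {..<t}" for s
      using duhamel_gaussian_source_integrand_ge[OF N t x, of s] that by (simp add: c_def)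
  qed
  also have "\<dots> = - Im (duhamel (gaussian_source N) t x)"
    using f unfolding duhamel_gaussian_source set_integrable_def set_lebesgue_integral_def
    by (subst integral_Im[symmetric])
      (auto intro!: Bochner_Integration.integral_cong simp: indicator_def simp flip: integral_minus)
  finally show ?thesis by (simp add: c_def)
qed

lemma Linf_norm_ge:
  assumes A: "A \<in> sets lborel" "emeasure lborel A \<noteq> 0" and L: "\<And>x. x \<in> A \<Longrightarrow> L \<le> norm (g x)"
  shows "ennreal L \<le> Linf_norm g"
proof (cases "(\<lambda>x. ennreal (cmod (g x))) \<in> borel_measurable lborel")
  case False
  then show ?thesis unfolding Linf_norm_def by (simp add: esssup_non_measurable)
next
  case True
  show ?thesis unfolding Linf_norm_def esssup_eq[OF True]
  proof (rule Inf_greatest, rule ccontr)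
    fix z assume z: "z \<in> {z. emeasure lborel {x \<in> space lborel. z < ennreal (cmod (g x))} = 0}"
      and "\<not> ennreal L \<le> z"
    then have "A \<subseteq> {x \<in> space lborel. z < ennreal (cmod (g x))}"
      using L by (auto simp: not_le intro: order_less_le_trans[OF _ ennreal_leI])
    then have "emeasure lborel A \<le> emeasure lborel {x \<in> space lborel. z < ennreal (cmod (g x))}"
      by (intro emeasure_mono) (use True in measurable)
    with z A show False by simp
  qed
qed

lemma nn_integral_Linf_norm_duhamel_gaussian_source_ge:
  assumes N: "N \<ge> 1" and L: "0 \<le> exp (- 1/2) / 10 * ln N - 1"
  shows "ennreal (N * (exp (- 1/2) / 10 * ln N - 1)\<^sup>2)
    \<le> (\<integral>\<^sup>+ t. (Linf_norm (duhamel (gaussian_source N) t))\<^sup>2 \<partial>lborel)"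
proof -
  define L where "L = exp (- 1/2) / 10 * ln N - 1"
  have "ennreal (L\<^sup>2) * indicator {0..N} t \<le> (Linf_norm (duhamel (gaussian_source N) t))\<^sup>2" for t
  proof (cases "t \<in> {0..N}")
    case True
    have "ennreal L \<le> Linf_norm (duhamel (gaussian_source N) t)"
    proof (rule Linf_norm_ge[of "ball 0 1"])
      show "emeasure lborel (ball (0::real^2) 1) \<noteq> 0"
        using emeasure_lborel_ball_real2[of 1 0] by simp
      fix x :: "real^2" assume "x \<in> ball 0 1"
      have "L \<le> exp (- 1/2) / 10 * ln (t + N) - 1"
        using True N unfolding L_def by (intro diff_right_mono mult_left_mono) auto
      also have "\<dots> \<le> - Im (duhamel (gaussian_source N) t x)"
        using True \<open>x \<in> ball 0 1\<close> by (intro neg_Im_duhamel_gaussian_source_ge N) auto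
      also have "\<dots> \<le> norm (duhamel (gaussian_source N) t x)"
        using abs_Im_le_cmod[of "duhamel (gaussian_source N) t x"] by linarith
      finally show "L \<le> norm (duhamel (gaussian_source N) t x)" .
    qed simp
    then show ?thesis
      using True L by (simp add: L_def ennreal_power[symmetric] power_mono)
  qed simp
  then have "(\<integral>\<^sup>+ t. ennreal (L\<^sup>2) * indicator {0..N} t \<partial>lborel)
      \<le> (\<integral>\<^sup>+ t. (Linf_norm (duhamel (gaussian_source N) t))\<^sup>2 \<partial>lborel)"
    by (intro nn_integral_mono)
  moreover have "(\<integral>\<^sup>+ t. ennreal (L\<^sup>2) * indicator {0..N} t \<partial>lborel) = ennreal (N * L\<^sup>2)"
    using N by (subst nn_integral_cmult_indicator) (auto simp: ennreal_mult mult.commute)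
  ultimately show ?thesis by (simp add: L_def)
qed

theorem mainTheorem3:
  shows "\<not> (\<exists>C::real. \<forall>F :: real \<Rightarrow> real^2 \<Rightarrow> complex.
            schwartz (\<lambda>z::real \<times> (real^2). F (fst z) (snd z)) \<and>
            (\<forall>s x y. norm x = norm y \<longrightarrow> F s x = F s y) \<longrightarrow>
            (\<integral>\<^sup>+ t. (Linf_norm (duhamel F t))\<^sup>2 \<partial>lborel)
              \<le> ennreal C * (\<integral>\<^sup>+ s. (L1_norm (F s))\<^sup>2 \<partial>lborel))"
  apply (intro notI, elim exE)
  subgoal premises bound for C
  proof -
    define K where "K = max C 0 * (pi\<^sup>2 * sqrt pi)"
    define N where "N = exp (10 * exp (1/2) * (2 + sqrt K))"
    have "K \<ge> 0" "N \<ge> 1" by (simp_all add: K_def N_def)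
    have L: "exp (- 1/2) / 10 * ln N - 1 = 1 + sqrt K"
      by (simp add: N_def exp_minus field_simps)
    have "ennreal (N * (1 + sqrt K)\<^sup>2)
        \<le> (\<integral>\<^sup>+ t. (Linf_norm (duhamel (gaussian_source N) t))\<^sup>2 \<partial>lborel)"
      using nn_integral_Linf_norm_duhamel_gaussian_source_ge[OF \<open>N \<ge> 1\<close>, unfolded L] \<open>K \<ge> 0\<close> by simp
    also have "\<dots> \<le> ennreal C * (\<integral>\<^sup>+ s. (L1_norm (gaussian_source N s))\<^sup>2 \<partial>lborel)"
      using \<open>N \<ge> 1\<close> by (intro bound[rule_format] conjI schwartz_gaussian_source)
        (auto simp: gaussian_source_def gaussian_def)
    also have "\<dots> \<le> ennreal (N * K)"
      using \<open>N \<ge> 1\<close> by (cases "C \<ge> 0")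
        (auto simp: nn_integral_L1_norm_gaussian_source K_def ennreal_mult'[symmetric] ennreal_neg
          mult_ac)
    finally have "(1 + sqrt K)\<^sup>2 \<le> K"
      using \<open>N \<ge> 1\<close> \<open>K \<ge> 0\<close> by (simp add: ennreal_le_iff)
    moreover have "(1 + sqrt K)\<^sup>2 = 1 + 2 * sqrt K + K" and "0 \<le> sqrt K"
      using \<open>K \<ge> 0\<close> by (simp_all add: power2_eq_square algebra_simps)
    ultimately show False by linarith
  qed
  done

end
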